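(* For each $\rho>2$, the operator that maps $f\in L^1(\gamma_\infty)$ to $x\mapsto\|H^{\mathrm{glob}}_tf(x)\|_{v(\rho),(0,1]}$ (variation in $t\in(0,1]$) is of weak type $(1,1)$ with respect to $\gamma_\infty$; i.e. there is $C$ with $\gamma_\infty\{x:\|H^{\mathrm{glob}}_tf(x)\|_{v(\rho),(0,1]}>\alpha\}\le \frac C\alpha\|f\|_{L^1(\gamma_\infty)}$ for all $\alpha>0$ and $f\in L^1(\gamma_\infty)$.
   Context: $R(x)=x^2/2$, $d\gamma_\infty(u)=(2\pi)^{-1/2}e^{-R(u)}du$ on $\mathbb R$. $K_t(x,u)=\frac{e^{R(x)}}{\sqrt{1-e^{-2t}}}\exp\bigl(-\frac12\frac{(e^{-t}u-x)^2}{1-e^{-2t}}\bigr)$. Let $\eta\ge0$ be a fixed smooth function on $[0,\infty)$ with $\eta=1$ on $[0,1/2]$ and $\eta=0$ on $[1,\infty)$. Define $H^{\mathrm{glob}}_tf(x)=\int f(u)K_t(x,u)\bigl(1-\eta((1+|x|)|x-u|)\bigr)\,d\gamma_\infty(u)$. For $1\le\rho<\infty$ and an interval $I$, $\|\phi\|_{v(\rho),I}=\sup(\sum_{i=1}^n|\phi(t_i)-\phi(t_{i-1})|^\rho)^{1/\rho}$ over finite increasing sequences in $I$. *)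

theory Defs
  imports "HOL-Analysis.Analysis"
begin

definition R :: "real \<Rightarrow> real" where
  "R x = x\<^sup>2 / 2"

definition gauss :: "real measure" where
  "gauss = density lborel (\<lambda>u. ennreal (exp (- R u) / sqrt (2 * pi)))"

definition K :: "real \<Rightarrow> real \<Rightarrow> real \<Rightarrow> real" where
  "K t x u = exp (R x) / sqrt (1 - exp (-2 * t))
             * exp (- (1/2) * (exp (-t) * u - x)\<^sup>2 / (1 - exp (-2 * t)))"

definition Hglob :: "(real \<Rightarrow> real) \<Rightarrow> real \<Rightarrow> (real \<Rightarrow> real) \<Rightarrow> real \<Rightarrow> real" where
  "Hglob eta t f x =
     (\<integral>u. f u * K t x u * (1 - eta ((1 + \<bar>x\<bar>) * \<bar>x - u\<bar>)) \<partial>gauss)"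

text \<open>Valued in ereal since it may be infinite.\<close>
definition rho_var :: "real \<Rightarrow> real set \<Rightarrow> (real \<Rightarrow> real) \<Rightarrow> ereal" where
  "rho_var \<rho> I \<phi> =
     (SUP ts \<in> {ts. sorted_wrt (<) ts \<and> set ts \<subseteq> I}.
        ereal ((\<Sum>i\<in>{1..<length ts}. \<bar>\<phi> (ts ! i) - \<phi> (ts ! (i - 1))\<bar> powr \<rho>) powr (1 / \<rho>)))"

end

(*
  Where the cut-off 1 - eta((1 + |x|) |x - u|) does not vanish, u stays at distance at least
  1/(2(1 + |x|)) from x, and there the Mehler kernel K_t(x,u), 0 < t <= 1, is bounded by
  C (1 + |x|) exp(x^2/2). Moreover log K_t(x,u) has a t-derivative whose sign is that of a
  cubic polynomial in exp(-t), so t -> K_t(x,u) is monotone between at most three turning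
  points and its total variation on (0,1] is bounded by the same quantity. The rho-variation
  is dominated by the 1-variation, and the variation of an integral by the integral of the
  variation; hence the rho-variation of H^glob_t f(x) is at most C ||f||_1 (1 + |x|) exp(x^2/2).
  The Gaussian tail estimate gamma{(1 + |x|) exp(x^2/2) > L} <= 4/L then gives the weak type
  (1,1) bound.
*)

theory Submission
  imports
    Defs
    "HOL-Probability.Distributions"
    "HOL-Computational_Algebra.Polynomial"
    "HOL-Real_Asymp.Real_Asymp"
begin

section \<open>Gaussian tail estimates\<close>

lemma gauss_eq_std_normal: "gauss = density lborel std_normal_density"
  unfolding gauss_def normal_density_def R_def
  by (intro arg_cong[where f="density lborel"] ext) (simp add: field_simps)

lemma prob_space_gauss: "prob_space gauss"
  unfolding gauss_eq_std_normal by (rule prob_space_normal_density) simp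

lemma sets_gauss [simp, measurable_cong]: "sets gauss = sets borel"
  unfolding gauss_def by simp

lemma nn_integral_std_normal_tail_weight:
  assumes a: "a > 0"
  shows "(\<integral>\<^sup>+x. ennreal (x * std_normal_density x / a) * indicator {a..} x \<partial>lborel)
         = ennreal (exp (- a\<^sup>2 / 2) / (a * sqrt (2 * pi)))"
proof -
  have "(\<integral>\<^sup>+x. ennreal (x * std_normal_density x / a) * indicator {a..} x \<partial>lborel)
      = ennreal (0 - (- exp (- a\<^sup>2 / 2) / (a * sqrt (2 * pi))))"
  proof (rule nn_integral_FTC_atLeast[where F="\<lambda>x. - exp (- x\<^sup>2 / 2) / (a * sqrt (2 * pi))"])
    show "(\<lambda>x. x * std_normal_density x / a) \<in> borel_measurable borel"
      unfolding normal_density_def by measurable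
    show "DERIV (\<lambda>x. - exp (- x\<^sup>2 / 2) / (a * sqrt (2 * pi))) x :> x * std_normal_density x / a" for x
      unfolding normal_density_def using a
      by (auto intro!: derivative_eq_intros simp: field_simps)
    show "0 \<le> x * std_normal_density x / a" if "a \<le> x" for x
      using that a by (auto intro!: mult_nonneg_nonneg normal_density_nonneg)
    show "((\<lambda>x::real. - exp (- x\<^sup>2 / 2) / (a * sqrt (2 * pi))) \<longlongrightarrow> 0) at_top"
      using a by real_asymp
  qed
  then show ?thesis by simp
qed

text \<open>Mills' ratio bound: on \<open>{a..}\<close> the density is dominated by \<open>x/a\<close> times itself,
  which has an explicit primitive.\<close>

lemma emeasure_gauss_abs_gt:
  assumes a: "a > 0"
  shows "emeasure gauss {x. a < \<bar>x\<bar>} \<le> ennreal (2 * exp (- a\<^sup>2 / 2) / (a * sqrt (2 * pi)))"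
proof -
  define G where "G x = ennreal (x * std_normal_density x / a) * indicator {a..} x" for x
  have G_measurable: "G \<in> borel_measurable borel"
    unfolding G_def normal_density_def by measurable
  have "emeasure gauss {x. a < \<bar>x\<bar>}
      = (\<integral>\<^sup>+x. ennreal (std_normal_density x) * indicator {x. a < \<bar>x\<bar>} x \<partial>lborel)"
    unfolding gauss_eq_std_normal by (subst emeasure_density) (auto simp: mult.commute)
  also have "\<dots> \<le> (\<integral>\<^sup>+x. G x + G (- x) \<partial>lborel)"
  proof (intro nn_integral_mono)
    fix x :: real
    show "ennreal (std_normal_density x) * indicator {x. a < \<bar>x\<bar>} x \<le> G x + G (- x)"
    proof (cases "a < \<bar>x\<bar>")
      case True
      have d: "0 \<le> std_normal_density x" by (rule normal_density_nonneg)
      have "std_normal_density x \<le> \<bar>x\<bar> * std_normal_density x / a"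
        using True a d by (simp add: field_simps mult_right_mono)
      then show ?thesis
        using True a d unfolding G_def
        by (cases "x \<ge> 0")
          (auto simp: normal_density_def indicator_def intro!: ennreal_leI add_increasing add_increasing2)
    qed (simp add: indicator_def)
  qed
  also have "\<dots> = (\<integral>\<^sup>+x. G x \<partial>lborel) + (\<integral>\<^sup>+x. G (- x) \<partial>lborel)"
    using G_measurable by (intro nn_integral_add) auto
  also have "(\<integral>\<^sup>+x. G (- x) \<partial>lborel) = (\<integral>\<^sup>+x. G x \<partial>lborel)"
    using nn_integral_real_affine[OF G_measurable, of "-1" 0] by simp
  also have "(\<integral>\<^sup>+x. G x \<partial>lborel) = ennreal (exp (- a\<^sup>2 / 2) / (a * sqrt (2 * pi)))"
    unfolding G_def using nn_integral_std_normal_tail_weight[OF a] by simp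
  also have "\<dots> + \<dots> = ennreal (2 * exp (- a\<^sup>2 / 2) / (a * sqrt (2 * pi)))"
    using a by (subst ennreal_plus[symmetric]) auto
  finally show ?thesis .
qed

lemma emeasure_gauss_growth_gt_level:
  assumes a: "1 \<le> a"
  shows "emeasure gauss {x. (1 + a) * exp (a\<^sup>2 / 2) < (1 + \<bar>x\<bar>) * exp (x\<^sup>2 / 2)}
    \<le> ennreal (4 / ((1 + a) * exp (a\<^sup>2 / 2)))"
proof -
  have "{x. (1 + a) * exp (a\<^sup>2 / 2) < (1 + \<bar>x\<bar>) * exp (x\<^sup>2 / 2)} \<subseteq> {x. a < \<bar>x\<bar>}"
  proof safe
    fix x :: real assume less: "(1 + a) * exp (a\<^sup>2 / 2) < (1 + \<bar>x\<bar>) * exp (x\<^sup>2 / 2)"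
    show "a < \<bar>x\<bar>"
    proof (rule ccontr)
      assume "\<not> a < \<bar>x\<bar>"
      moreover from this have "x\<^sup>2 \<le> a\<^sup>2" using power_mono[of "\<bar>x\<bar>" a 2] by simp
      ultimately have "(1 + \<bar>x\<bar>) * exp (x\<^sup>2 / 2) \<le> (1 + a) * exp (a\<^sup>2 / 2)"
        by (intro mult_mono) auto
      with less show False by simp
    qed
  qed
  then have "emeasure gauss {x. (1 + a) * exp (a\<^sup>2 / 2) < (1 + \<bar>x\<bar>) * exp (x\<^sup>2 / 2)}
      \<le> emeasure gauss {x. a < \<bar>x\<bar>}"
    by (rule emeasure_mono) simp
  also have "\<dots> \<le> ennreal (2 * exp (- a\<^sup>2 / 2) / (a * sqrt (2 * pi)))"
    using a by (intro emeasure_gauss_abs_gt) auto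
  also have "\<dots> \<le> ennreal (4 / ((1 + a) * exp (a\<^sup>2 / 2)))"
  proof (rule ennreal_leI)
    have "1 \<le> sqrt (2 * pi)" using pi_gt3 by (simp add: real_le_rsqrt)
    then have "2 * exp (- a\<^sup>2 / 2) / (a * sqrt (2 * pi)) \<le> 2 * exp (- a\<^sup>2 / 2) / a"
      using a by (intro divide_left_mono) (auto intro: mult_pos_pos)
    also have "\<dots> = 4 / (2 * a * exp (a\<^sup>2 / 2))"
      by (simp add: exp_minus field_simps)
    also have "\<dots> \<le> 4 / ((1 + a) * exp (a\<^sup>2 / 2))"
      using a by (intro divide_left_mono) (auto intro: mult_right_mono)
    finally show "2 * exp (- a\<^sup>2 / 2) / (a * sqrt (2 * pi)) \<le> 4 / ((1 + a) * exp (a\<^sup>2 / 2))" .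
  qed
  finally show ?thesis .
qed

lemma emeasure_gauss_growth_gt:
  assumes L: "L > 0"
  shows "emeasure gauss {x. L < (1 + \<bar>x\<bar>) * exp (x\<^sup>2 / 2)} \<le> ennreal (4 / L)"
proof (cases "L \<le> 4")
  case True
  then have "ennreal 1 \<le> ennreal (4 / L)" using L by (intro ennreal_leI) (simp add: field_simps)
  then show ?thesis
    using prob_space.emeasure_le_1[OF prob_space_gauss] by (metis ennreal_1 order_trans)
next
  case False
  have "\<exists>a\<ge>1. a \<le> L \<and> (1 + a) * exp (a\<^sup>2 / 2) = L"
  proof (rule IVT')
    show "(1 + 1) * exp (1\<^sup>2 / 2) \<le> L" using False exp_half_le2 by simp
    have "L \<le> (1 + L) * 1" by simp
    also have "\<dots> \<le> (1 + L) * exp (L\<^sup>2 / 2)" using L by (intro mult_left_mono) auto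
    finally show "L \<le> (1 + L) * exp (L\<^sup>2 / 2)" .
    show "continuous_on {1..L} (\<lambda>a. (1 + a) * exp (a\<^sup>2 / 2))" by (intro continuous_intros) auto
  qed (use False in simp)
  then show ?thesis using emeasure_gauss_growth_gt_level by blast
qed

lemma emeasure_gauss_dominated_gt:
  fixes V :: "real \<Rightarrow> ereal"
  assumes dom: "\<And>x. V x \<le> ereal (c * ((1 + \<bar>x\<bar>) * exp (x\<^sup>2 / 2)))"
    and c: "0 \<le> c" and \<alpha>: "0 < \<alpha>"
  shows "emeasure gauss {x. ereal \<alpha> < V x} \<le> ennreal (4 * c / \<alpha>)"
proof (cases "c = 0")
  case True
  then have "V x \<le> ereal \<alpha>" for x
    using dom[of x] \<alpha> by (auto intro: order_trans)
  then have "\<not> ereal \<alpha> < V x" for x by (simp add: not_less)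
  then have "{x. ereal \<alpha> < V x} = {}" by simp
  then show ?thesis by simp
next
  case False
  with c have c: "0 < c" by simp
  have "{x. ereal \<alpha> < V x} \<subseteq> {x. \<alpha> / c < (1 + \<bar>x\<bar>) * exp (x\<^sup>2 / 2)}"
  proof safe
    fix x assume "ereal \<alpha> < V x"
    then have "ereal \<alpha> < ereal (c * ((1 + \<bar>x\<bar>) * exp (x\<^sup>2 / 2)))"
      using dom[of x] by (rule order_less_le_trans)
    then have "\<alpha> < c * ((1 + \<bar>x\<bar>) * exp (x\<^sup>2 / 2))" by simp
    then show "\<alpha> / c < (1 + \<bar>x\<bar>) * exp (x\<^sup>2 / 2)"
      using c by (simp add: pos_divide_less_eq mult.commute)
  qed
  then have "emeasure gauss {x. ereal \<alpha> < V x}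
      \<le> emeasure gauss {x. \<alpha> / c < (1 + \<bar>x\<bar>) * exp (x\<^sup>2 / 2)}"
    by (rule emeasure_mono) measurable
  also have "\<dots> \<le> ennreal (4 / (\<alpha> / c))"
    using \<alpha> c by (intro emeasure_gauss_growth_gt) simp
  finally show ?thesis by simp
qed

section \<open>Variation sums\<close>

fun variation_sum :: "('a \<Rightarrow> real) \<Rightarrow> 'a list \<Rightarrow> real" where
  "variation_sum g (a # b # ts) = \<bar>g b - g a\<bar> + variation_sum g (b # ts)"
| "variation_sum g _ = 0"

lemma variation_sum_nonneg: "0 \<le> variation_sum g ts"
  by (induction g ts rule: variation_sum.induct) auto

lemma variation_sum_eq_sum:
  "variation_sum g ts = (\<Sum>i\<in>{1..<length ts}. \<bar>g (ts ! i) - g (ts ! (i - 1))\<bar>)"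
proof (induction g ts rule: variation_sum.induct)
  case (1 g a b ts)
  have split: "{1..<length (a # b # ts)} = insert 1 (Suc ` {1..<length (b # ts)})"
    by (auto simp: image_iff)
  have "(\<Sum>i\<in>{1..<length (a # b # ts)}. \<bar>g ((a # b # ts) ! i) - g ((a # b # ts) ! (i - 1))\<bar>)
      = \<bar>g b - g a\<bar> + (\<Sum>i\<in>Suc ` {1..<length (b # ts)}. \<bar>g ((a # b # ts) ! i) - g ((a # b # ts) ! (i - 1))\<bar>)"
    unfolding split by (subst sum.insert) auto
  also have "(\<Sum>i\<in>Suc ` {1..<length (b # ts)}. \<bar>g ((a # b # ts) ! i) - g ((a # b # ts) ! (i - 1))\<bar>)
      = (\<Sum>i\<in>{1..<length (b # ts)}. \<bar>g ((b # ts) ! i) - g ((b # ts) ! (i - 1))\<bar>)"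
    by (subst sum.reindex) (auto intro!: sum.cong simp: nth_Cons')
  finally have "(\<Sum>i\<in>{1..<length (a # b # ts)}. \<bar>g ((a # b # ts) ! i) - g ((a # b # ts) ! (i - 1))\<bar>)
      = \<bar>g b - g a\<bar> + (\<Sum>i\<in>{1..<length (b # ts)}. \<bar>g ((b # ts) ! i) - g ((b # ts) ! (i - 1))\<bar>)" .
  with 1 show ?case by simp
qed auto

lemma variation_sum_cmult: "variation_sum (\<lambda>t. c * g t) ts = \<bar>c\<bar> * variation_sum g ts"
  by (induction ts rule: induct_list012) (simp_all add: abs_mult distrib_left flip: right_diff_distrib)

lemma variation_sum_uminus: "variation_sum (\<lambda>t. - g t) ts = variation_sum g ts"
  by (induction ts rule: induct_list012) (simp_all add: abs_minus_commute)

lemma variation_sum_const_on: "set ts \<subseteq> {z} \<Longrightarrow> variation_sum g ts = 0"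
  by (induction ts rule: induct_list012) auto

lemma variation_sum_append_le:
  assumes "\<forall>t\<in>set (xs @ ys). \<bar>g t\<bar> \<le> M" "0 \<le> M"
  shows "variation_sum g (xs @ ys) \<le> variation_sum g xs + variation_sum g ys + 2 * M"
  using assms
proof (induction xs rule: induct_list012)
  case 1
  then show ?case using variation_sum_nonneg[of g ys] by simp
next
  case (2 a)
  then show ?case by (cases ys) (auto simp: abs_le_iff)
qed simp

lemma variation_sum_mono_on:
  assumes "sorted ts" "mono_on (set ts) g" "ts \<noteq> []"
  shows "variation_sum g ts = g (last ts) - g (hd ts)"
  using assms
proof (induction ts rule: induct_list012)
  case (3 a b ts)
  have "g a \<le> g b" using 3(3,4) by (auto intro: mono_onD)
  moreover have "mono_on (set (b # ts)) g" using 3(4) by (rule mono_on_subset) auto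
  then have "variation_sum g (b # ts) = g (last (b # ts)) - g b"
    using 3(2,3) by simp
  ultimately show ?case by simp
qed auto

lemma variation_sum_monotone_le:
  assumes "sorted ts" "mono_on (set ts) g \<or> antimono_on (set ts) g"
    and "\<forall>t\<in>set ts. \<bar>g t\<bar> \<le> M" "0 \<le> M"
  shows "variation_sum g ts \<le> 2 * M"
proof (cases "ts = []")
  case False
  then have bounds: "\<bar>g (last ts)\<bar> \<le> M" "\<bar>g (hd ts)\<bar> \<le> M"
    using assms(3) by auto
  show ?thesis using assms(2)
  proof
    assume "mono_on (set ts) g"
    then show ?thesis
      using variation_sum_mono_on[OF assms(1)] False bounds by (auto simp: abs_le_iff)
  next
    assume "antimono_on (set ts) g"
    then have "mono_on (set ts) (\<lambda>t. - g t)" by (auto simp: monotone_on_def)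
    then show ?thesis
      using variation_sum_mono_on[OF assms(1)] variation_sum_uminus[of g] False bounds
      by (fastforce simp: abs_le_iff)
  qed
qed (use assms(4) in simp)

lemma not_pred_dropWhile_sorted:
  assumes "sorted xs" "\<And>a b. a \<le> b \<Longrightarrow> P b \<Longrightarrow> P a" "t \<in> set (dropWhile P xs)"
  shows "\<not> P t"
  using assms(1,3)
proof (induction xs)
  case (Cons a xs)
  show ?case
  proof (cases "P a")
    case True
    with Cons show ?thesis by simp
  next
    case False
    with Cons.prems have "a \<le> t" by auto
    with False show ?thesis using assms(2) by blast
  qed
qed simp

lemma sorted_split_at:
  fixes z :: "'a :: linorder"
  assumes "sorted xs"
  obtains ls ms rs where "xs = ls @ ms @ rs"
    and "set ls \<subseteq> {..<z}" "set ms \<subseteq> {z}" "set rs \<subseteq> {z<..}"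
proof (rule that)
  define ys where "ys = dropWhile (\<lambda>t. t < z) xs"
  have "sorted ys" unfolding ys_def using assms by (rule sorted_dropWhile)
  have ys_ge: "z \<le> t" if "t \<in> set ys" for t
  proof -
    have "\<not> t < z"
      by (rule not_pred_dropWhile_sorted[OF assms _ that[unfolded ys_def]]) simp
    then show ?thesis by simp
  qed
  show "xs = takeWhile (\<lambda>t. t < z) xs @ takeWhile (\<lambda>t. t \<le> z) ys @ dropWhile (\<lambda>t. t \<le> z) ys"
    unfolding ys_def by simp
  show "set (takeWhile (\<lambda>t. t < z) xs) \<subseteq> {..<z}"
    by (auto dest: set_takeWhileD)
  show "set (takeWhile (\<lambda>t. t \<le> z) ys) \<subseteq> {z}"
  proof
    fix t assume "t \<in> set (takeWhile (\<lambda>t. t \<le> z) ys)"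
    then have "t \<in> set ys" "t \<le> z" by (auto dest: set_takeWhileD)
    with ys_ge show "t \<in> {z}" by (simp add: order_antisym)
  qed
  show "set (dropWhile (\<lambda>t. t \<le> z) ys) \<subseteq> {z<..}"
  proof
    fix t assume "t \<in> set (dropWhile (\<lambda>t. t \<le> z) ys)"
    then have "\<not> t \<le> z"
      by (rule not_pred_dropWhile_sorted[OF \<open>sorted ys\<close>, rotated]) simp
    then show "t \<in> {z<..}" by simp
  qed
qed

text \<open>Each cut point costs the two boundary jumps, bounded by \<open>2 M\<close> each, on top of the
  variation of the two sides; this gives the factor \<open>4\<close> per cut point.\<close>

lemma variation_sum_piecewise_monotone_le:
  fixes g :: "real \<Rightarrow> real"
  assumes "finite Z" "is_interval I" "\<forall>t\<in>I. \<bar>g t\<bar> \<le> M" "0 \<le> M"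
    and "\<forall>J. is_interval J \<and> J \<subseteq> I - Z \<longrightarrow> mono_on J g \<or> antimono_on J g"
    and "sorted ts" "set ts \<subseteq> I"
  shows "variation_sum g ts \<le> 2 * 4 ^ card Z * M"
  using assms
proof (induction Z arbitrary: I ts rule: finite_induct)
  case empty
  then have "mono_on I g \<or> antimono_on I g" by blast
  then have "mono_on (set ts) g \<or> antimono_on (set ts) g"
    using empty.prems(6) by (meson monotone_on_subset)
  then show ?case using variation_sum_monotone_le[OF empty.prems(5)] empty.prems(2,3,6) by auto
next
  case (insert z Z)
  obtain ls ms rs where ts: "ts = ls @ ms @ rs"
    and ls: "set ls \<subseteq> {..<z}" and ms: "set ms \<subseteq> {z}" and rs: "set rs \<subseteq> {z<..}"
    using sorted_split_at[OF insert.prems(5)] by blast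
  have side_bound: "variation_sum g xs \<le> 2 * 4 ^ card Z * M"
    if "sorted xs" "set xs \<subseteq> I'" and I': "I' = I \<inter> {..<z} \<or> I' = I \<inter> {z<..}" for xs I'
  proof (rule insert.IH[OF _ _ insert.prems(3) _ that(1,2)])
    show "is_interval I'"
      using I' insert.prems(1) unfolding is_interval_1 by auto
    show "\<forall>t\<in>I'. \<bar>g t\<bar> \<le> M" using I' insert.prems(2) by auto
    show "\<forall>J. is_interval J \<and> J \<subseteq> I' - Z \<longrightarrow> mono_on J g \<or> antimono_on J g"
      using I' insert.prems(4) by auto
  qed
  have "variation_sum g ls \<le> 2 * 4 ^ card Z * M"
    by (rule side_bound[where I'="I \<inter> {..<z}"]) (use insert.prems(5,6) ls in \<open>auto simp: ts sorted_append\<close>)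
  moreover have "variation_sum g rs \<le> 2 * 4 ^ card Z * M"
    by (rule side_bound[where I'="I \<inter> {z<..}"]) (use insert.prems(5,6) rs in \<open>auto simp: ts sorted_append\<close>)
  moreover have "variation_sum g ms = 0" using ms by (rule variation_sum_const_on)
  moreover have bounded: "\<forall>t\<in>set (ls @ ms @ rs). \<bar>g t\<bar> \<le> M"
    using insert.prems(2,6) ts by auto
  then have "variation_sum g ts \<le> variation_sum g ls + variation_sum g (ms @ rs) + 2 * M"
    "variation_sum g (ms @ rs) \<le> variation_sum g ms + variation_sum g rs + 2 * M"
    unfolding ts using insert.prems(3) by (auto intro!: variation_sum_append_le)
  ultimately have "variation_sum g ts \<le> 2 * (2 * 4 ^ card Z * M) + 4 * M"
    by linarith
  also have "\<dots> \<le> 2 * 4 ^ card (insert z Z) * M"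
    using insert(1,2) mult_left_mono[OF one_le_power[of "4::real" "card Z"] insert.prems(3)]
    by (simp add: algebra_simps)
  finally show ?case .
qed

lemma sum_powr_powr_le_sum:
  fixes a :: "'i \<Rightarrow> real"
  assumes fin: "finite I" and nonneg: "\<forall>i\<in>I. 0 \<le> a i" and \<rho>: "1 \<le> \<rho>"
  shows "(\<Sum>i\<in>I. a i powr \<rho>) powr (1 / \<rho>) \<le> (\<Sum>i\<in>I. a i)"
proof -
  define S where "S = (\<Sum>i\<in>I. a i)"
  have a_le_S: "a i \<le> S" if "i \<in> I" for i
    unfolding S_def using nonneg that fin by (intro member_le_sum) auto
  show ?thesis
  proof (cases "S = 0")
    case True
    then have "\<forall>i\<in>I. a i = 0" using sum_nonneg_eq_0_iff[OF fin] nonneg unfolding S_def by auto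
    then show ?thesis by simp
  next
    case False
    then have S: "0 < S" unfolding S_def using nonneg by (simp add: order_le_neq_trans sum_nonneg)
    have powr_split: "b powr \<rho> = b * b powr (\<rho> - 1)" if "0 < b" for b :: real
      using that powr_add[of b 1 "\<rho> - 1"] by simp
    have "a i powr \<rho> \<le> a i * S powr (\<rho> - 1)" if "i \<in> I" for i
    proof (cases "a i = 0")
      case False
      then have "0 < a i" using nonneg that by (simp add: order_le_neq_trans)
      then show ?thesis
        using a_le_S[OF that] \<rho> powr_split[of "a i"] by (auto intro: mult_left_mono powr_mono2)
    qed simp
    then have "(\<Sum>i\<in>I. a i powr \<rho>) \<le> S * S powr (\<rho> - 1)"
      unfolding S_def by (subst sum_distrib_right) (rule sum_mono)
    also have "\<dots> = S powr \<rho>" using powr_split[OF S] by simp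
    finally have "(\<Sum>i\<in>I. a i powr \<rho>) powr (1 / \<rho>) \<le> (S powr \<rho>) powr (1 / \<rho>)"
      using \<rho> by (intro powr_mono2) (auto intro: sum_nonneg)
    also have "\<dots> = S" using \<rho> S by (simp add: powr_powr)
    finally show ?thesis unfolding S_def .
  qed
qed

lemma rho_var_le:
  assumes "1 \<le> \<rho>" "\<And>ts. sorted_wrt (<) ts \<Longrightarrow> set ts \<subseteq> I \<Longrightarrow> variation_sum \<phi> ts \<le> V"
  shows "rho_var \<rho> I \<phi> \<le> ereal V"
  unfolding rho_var_def
proof (rule SUP_least, clarify)
  fix ts :: "real list" assume ts: "sorted_wrt (<) ts" "set ts \<subseteq> I"
  have "(\<Sum>i\<in>{1..<length ts}. \<bar>\<phi> (ts ! i) - \<phi> (ts ! (i - 1))\<bar> powr \<rho>) powr (1 / \<rho>)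
      \<le> variation_sum \<phi> ts"
    unfolding variation_sum_eq_sum by (rule sum_powr_powr_le_sum) (use assms(1) in auto)
  also have "\<dots> \<le> V" using assms(2)[OF ts] .
  finally show "ereal ((\<Sum>i\<in>{1..<length ts}. \<bar>\<phi> (ts ! i) - \<phi> (ts ! (i - 1))\<bar> powr \<rho>) powr (1 / \<rho>))
      \<le> ereal V" by simp
qed

lemma integrable_variation_sum:
  fixes F :: "'t \<Rightarrow> 'a \<Rightarrow> real"
  assumes "\<And>t. t \<in> set ts \<Longrightarrow> integrable M (F t)"
  shows "integrable M (\<lambda>u. variation_sum (\<lambda>t. F t u) ts)"
  using assms by (induction ts rule: induct_list012) auto

lemma variation_sum_integral_le:
  fixes F :: "'t \<Rightarrow> 'a \<Rightarrow> real"
  assumes "\<And>t. t \<in> set ts \<Longrightarrow> integrable M (F t)"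
  shows "variation_sum (\<lambda>t. \<integral>u. F t u \<partial>M) ts \<le> (\<integral>u. variation_sum (\<lambda>t. F t u) ts \<partial>M)"
  using assms
proof (induction ts rule: induct_list012)
  case (3 a b ts)
  have int: "integrable M (F a)" "integrable M (F b)"
    "integrable M (\<lambda>u. variation_sum (\<lambda>t. F t u) (b # ts))"
    using 3(3) integrable_variation_sum[of "b # ts" M F] by auto
  have "\<bar>(\<integral>u. F b u \<partial>M) - (\<integral>u. F a u \<partial>M)\<bar> \<le> (\<integral>u. \<bar>F b u - F a u\<bar> \<partial>M)"
    using int by (simp flip: Bochner_Integration.integral_diff)
  then show ?case
    using 3 int by (simp add: Bochner_Integration.integral_add)
qed simp_all

section \<open>The kernel off the diagonal\<close>

lemma two_thirds_le_one_minus_exp: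
  fixes t :: real
  assumes "0 < t" "t \<le> 1"
  shows "2 * t / 3 \<le> 1 - exp (-2 * t)"
proof -
  have "exp (-2 * t) = 1 / exp (2 * t)" by (simp add: exp_minus field_simps)
  also have "\<dots> \<le> 1 / (1 + 2 * t)"
    using exp_ge_add_one_self[of "2 * t"] assms by (intro divide_left_mono) auto
  also have "\<dots> \<le> 1 - 2 * t / 3" using assms by (simp add: field_simps)
  finally show ?thesis by simp
qed

text \<open>The heat-type factor \<open>s\<^sup>-\<^sup>1\<^sup>/\<^sup>2 exp (- d\<^sup>2 / 2s)\<close> is large only if both \<open>s\<close> and \<open>d\<close> are
  small; excluding that regime bounds it by \<open>O(y)\<close>.\<close>

lemma inv_sqrt_mul_exp_le:
  fixes s d y :: real
  assumes s: "0 < s" and y: "1 \<le> y" and d: "s < 1 / (20 * y\<^sup>2) \<Longrightarrow> 1 / (12 * y) \<le> \<bar>d\<bar>"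
  shows "1 / sqrt s * exp (- (1/2) * d\<^sup>2 / s) \<le> 288 * y"
proof (cases "s < 1 / (20 * y\<^sup>2)")
  case False
  then have "1 / (20 * y\<^sup>2) \<le> s" by simp
  then have "sqrt (1 / (20 * y\<^sup>2)) \<le> sqrt s" by (rule real_sqrt_le_mono)
  moreover have "sqrt (1 / (20 * y\<^sup>2)) = 1 / (sqrt 20 * y)"
    using y by (simp add: real_sqrt_divide real_sqrt_mult)
  ultimately have "1 / (sqrt 20 * y) \<le> sqrt s" by simp
  then have "1 / sqrt s \<le> sqrt 20 * y" using s y by (simp add: field_simps)
  moreover have "sqrt 20 \<le> (5::real)" by (simp add: real_sqrt_le_iff')
  moreover have "exp (- (1/2) * d\<^sup>2 / s) \<le> 1" using s by simp
  ultimately have "1 / sqrt s * exp (- (1/2) * d\<^sup>2 / s) \<le> (5 * y) * 1"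
    using y s by (intro mult_mono) (auto intro: order_trans mult_right_mono)
  then show ?thesis using y by simp
next
  case True
  have d: "1 / (12 * y) \<le> \<bar>d\<bar>" using d True .
  then have d2: "0 < d\<^sup>2" using y by (auto simp: order_less_le_trans)
  have "d\<^sup>2 / (2 * s) \<le> exp (d\<^sup>2 / (2 * s))"
    using exp_ge_add_one_self[of "d\<^sup>2 / (2 * s)"] by linarith
  then have e: "exp (- (1/2) * d\<^sup>2 / s) \<le> 2 * s / d\<^sup>2"
    using s d2 by (simp add: exp_minus field_simps)
  have "s < 1 / y\<^sup>2"
    using True y by (smt (verit) divide_left_mono mult_pos_pos zero_less_power)
  then have sqrt_s: "sqrt s < 1 / y"
    using y real_sqrt_less_mono by (fastforce simp: real_sqrt_divide)
  have "1 / sqrt s * exp (- (1/2) * d\<^sup>2 / s) \<le> 1 / sqrt s * (2 * s / d\<^sup>2)"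
    using s e by (intro mult_left_mono) auto
  also have "\<dots> = 2 * (s / sqrt s) / d\<^sup>2" by simp
  also have "\<dots> = 2 * sqrt s / d\<^sup>2" using s by (simp only: real_div_sqrt less_imp_le)
  also have "\<dots> \<le> 2 * (1 / y) / (1 / (12 * y))\<^sup>2"
  proof (intro divide_mono mult_left_mono)
    show "(1 / (12 * y))\<^sup>2 \<le> d\<^sup>2"
      using power_mono[OF d, of 2] y by simp
  qed (use sqrt_s y s in auto)
  also have "\<dots> = 288 * y" using y by (simp add: field_simps power2_eq_square)
  finally show ?thesis .
qed

text \<open>Off the diagonal strip \<open>(1 + \<bar>x\<bar>) \<bar>x - u\<bar> < 1/2\<close> and for small \<open>t\<close>, the drift
  \<open>(1 - e\<^sup>-\<^sup>t) \<bar>x\<bar> \<le> t \<bar>x\<bar>\<close> is too small to bring \<open>e\<^sup>-\<^sup>t u\<close> close to \<open>x\<close>.\<close>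

lemma abs_exp_neg_mult_sub_ge:
  fixes t x u :: real
  assumes t: "0 < t" "t \<le> 1" and far: "1/2 \<le> (1 + \<bar>x\<bar>) * \<bar>x - u\<bar>"
    and small: "1 - exp (-2 * t) < 1 / (20 * (1 + \<bar>x\<bar>)\<^sup>2)"
  shows "1 / (12 * (1 + \<bar>x\<bar>)) \<le> \<bar>exp (- t) * u - x\<bar>"
proof -
  define y where "y = 1 + \<bar>x\<bar>"
  have y: "1 \<le> y" "\<bar>x\<bar> \<le> y" by (auto simp: y_def)
  have "exp t \<le> 3" using t exp_le order_trans[of "exp t" "exp 1" 3] by simp
  then have e3: "1/3 \<le> exp (- t)" by (simp add: exp_minus field_simps)
  have e1: "1 - exp (- t) \<le> t" using exp_ge_add_one_self[of "-t"] by simp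
  have e0: "exp (- t) \<le> 1" using t by simp
  have ux: "1 / (2 * y) \<le> \<bar>u - x\<bar>"
    using far y by (simp add: y_def field_simps abs_minus_commute)
  have "2 * t / 3 < 1 / (20 * y\<^sup>2)"
    using two_thirds_le_one_minus_exp[OF t] small unfolding y_def by linarith
  then have ts: "t \<le> 3 / (40 * y\<^sup>2)" using y by (simp add: field_simps)
  have "exp (- t) * u - x = exp (- t) * (u - x) - (1 - exp (- t)) * x"
    by (simp add: algebra_simps)
  then have "\<bar>exp (- t) * (u - x)\<bar> - \<bar>(1 - exp (- t)) * x\<bar> \<le> \<bar>exp (- t) * u - x\<bar>"
    using abs_triangle_ineq2[of "exp (- t) * (u - x)" "(1 - exp (- t)) * x"] by simp
  then have "exp (- t) * \<bar>u - x\<bar> - (1 - exp (- t)) * \<bar>x\<bar> \<le> \<bar>exp (- t) * u - x\<bar>"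
    using e0 by (simp add: abs_mult)
  moreover have "1/3 * (1 / (2 * y)) \<le> exp (- t) * \<bar>u - x\<bar>"
    using e3 ux y by (intro mult_mono) auto
  moreover have "(1 - exp (- t)) * \<bar>x\<bar> \<le> 3 / (40 * y\<^sup>2) * y"
    using e1 ts y e0 by (intro mult_mono) auto
  moreover have "3 / (40 * y\<^sup>2) * y = 3 / (40 * y)" using y by (simp add: power2_eq_square)
  moreover have "1 / (12 * y) \<le> 1/3 * (1 / (2 * y)) - 3 / (40 * y)" using y by (simp add: field_simps)
  ultimately show ?thesis unfolding y_def by linarith
qed

lemma K_nonneg: "0 < t \<Longrightarrow> 0 \<le> K t x u"
  unfolding K_def by (intro mult_nonneg_nonneg divide_nonneg_nonneg) auto

lemma K_le_inv_sqrt: "0 < t \<Longrightarrow> K t x u \<le> exp (R x) / sqrt (1 - exp (-2 * t))"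
  unfolding K_def using mult_left_mono[of _ 1 "exp (R x) / sqrt (1 - exp (-2 * t))"] by simp

lemma K_le_off_diagonal:
  assumes t: "0 < t" "t \<le> 1" and far: "1/2 \<le> (1 + \<bar>x\<bar>) * \<bar>x - u\<bar>"
  shows "K t x u \<le> 288 * (1 + \<bar>x\<bar>) * exp (R x)"
proof -
  have "1 / sqrt (1 - exp (-2 * t)) * exp (- (1/2) * (exp (- t) * u - x)\<^sup>2 / (1 - exp (-2 * t)))
      \<le> 288 * (1 + \<bar>x\<bar>)"
    by (rule inv_sqrt_mul_exp_le) (use t abs_exp_neg_mult_sub_ge[OF t far] in auto)
  then have "exp (R x) * (1 / sqrt (1 - exp (-2 * t))
      * exp (- (1/2) * (exp (- t) * u - x)\<^sup>2 / (1 - exp (-2 * t)))) \<le> exp (R x) * (288 * (1 + \<bar>x\<bar>))"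
    by (intro mult_left_mono) auto
  then show ?thesis unfolding K_def by (simp add: ac_simps)
qed

section \<open>Monotonicity of the kernel in time\<close>

definition K_log :: "real \<Rightarrow> real \<Rightarrow> real \<Rightarrow> real" where
  "K_log x u t = - ln (1 - exp (-2 * t)) / 2 - (exp (- t) * u - x)\<^sup>2 / (2 * (1 - exp (-2 * t)))"

text \<open>The sign of \<open>\<partial>\<^sub>t log K\<^sub>t(x,u)\<close> is that of a cubic polynomial in \<open>w = e\<^sup>-\<^sup>t\<close>.\<close>

definition K_cubic :: "real \<Rightarrow> real \<Rightarrow> real \<Rightarrow> real" where
  "K_cubic x u w = w ^ 3 - u * x * w\<^sup>2 + (u\<^sup>2 + x\<^sup>2 - 1) * w - u * x"

lemma exp_neg_mult_2: "exp (-2 * t) = (exp (- t :: real))\<^sup>2"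
  by (simp add: power2_eq_square flip: exp_add)

lemma K_eq_exp_K_log:
  assumes "0 < t"
  shows "K t x u = exp (R x + K_log x u t)"
proof -
  define S where "S = 1 - exp (-2 * t)"
  define B where "B = (exp (- t) * u - x)\<^sup>2 / (2 * S)"
  have "0 < S" using assms unfolding S_def by simp
  then have "exp (- ln S / 2) = 1 / sqrt S"
    by (simp add: exp_minus powr_def inverse_eq_divide flip: powr_half_sqrt)
  then have "exp (K_log x u t) = 1 / sqrt S / exp B"
    unfolding K_log_def S_def[symmetric] B_def[symmetric] by (simp add: exp_diff)
  moreover have "exp (- (1/2) * (exp (- t) * u - x)\<^sup>2 / S) = 1 / exp B"
    unfolding B_def by (simp add: exp_minus inverse_eq_divide)
  ultimately show ?thesis
    unfolding K_def S_def[symmetric] by (simp add: exp_add)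
qed

lemma DERIV_K_log:
  fixes t x u :: real
  assumes t: "0 < t"
  defines "w \<equiv> exp (- t)"
  shows "(K_log x u has_real_derivative w * K_cubic x u w / (1 - w\<^sup>2)\<^sup>2) (at t)"
proof -
  define S where "S = 1 - w\<^sup>2"
  define L where "L v = - ln (1 - v\<^sup>2) / 2 - (v * u - x)\<^sup>2 / (2 * (1 - v\<^sup>2))" for v
  have S: "0 < S" using t unfolding S_def w_def exp_neg_mult_2[symmetric] by simp
  have "((\<lambda>v. 1 - v\<^sup>2) has_real_derivative - (2 * w)) (at w)"
    by (auto intro!: derivative_eq_intros)
  from DERIV_chain2[OF DERIV_ln_divide[OF S[unfolded S_def]] this]
  have "((\<lambda>v. ln (1 - v\<^sup>2)) has_real_derivative - (2 * w) / S) (at w)"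
    by (simp add: S_def)
  moreover have "((\<lambda>v. (v * u - x)\<^sup>2) has_real_derivative 2 * (w * u - x) * u) (at w)"
    by (auto intro!: derivative_eq_intros)
  moreover have "((\<lambda>v. 2 * (1 - v\<^sup>2)) has_real_derivative - (4 * w)) (at w)"
    by (auto intro!: derivative_eq_intros)
  ultimately have "(L has_real_derivative - (- (2 * w) / S) / 2
      - ((2 * (w * u - x) * u) * (2 * S) - (w * u - x)\<^sup>2 * (- (4 * w))) / ((2 * S) * (2 * S))) (at w)"
    unfolding L_def[abs_def] using S unfolding S_def
    by (intro DERIV_diff DERIV_cdivide DERIV_minus DERIV_divide) auto
  then have "((\<lambda>t. L (exp (- t))) has_real_derivative
      (- (- (2 * w) / S) / 2 - ((2 * (w * u - x) * u) * (2 * S) - (w * u - x)\<^sup>2 * (- (4 * w))) / ((2 * S) * (2 * S))) * (- w)) (at t)"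
    unfolding w_def by (rule DERIV_chain2) (auto intro!: derivative_eq_intros)
  also have "(- (- (2 * w) / S) / 2 - ((2 * (w * u - x) * u) * (2 * S) - (w * u - x)\<^sup>2 * (- (4 * w))) / ((2 * S) * (2 * S))) * (- w)
      = w * (- (w * S - (w * u - x) * u * S - (w * u - x)\<^sup>2 * w)) / S\<^sup>2"
    using S by (simp add: field_simps power2_eq_square)
  also have "- (w * S - (w * u - x) * u * S - (w * u - x)\<^sup>2 * w) = K_cubic x u w"
    unfolding S_def K_cubic_def by (simp add: algebra_simps power2_eq_square power3_eq_cube)
  also have "(\<lambda>t. L (exp (- t))) = K_log x u"
    unfolding L_def K_log_def exp_neg_mult_2 ..
  finally show ?thesis unfolding S_def .
qed

lemma is_interval_continuous_nonzero_sign: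
  fixes q :: "real \<Rightarrow> real"
  assumes "continuous_on J q" "is_interval J" "\<forall>t\<in>J. q t \<noteq> 0"
  shows "(\<forall>t\<in>J. 0 < q t) \<or> (\<forall>t\<in>J. q t < 0)"
proof (rule ccontr)
  assume "\<not> ?thesis"
  then obtain a b where ab: "a \<in> J" "b \<in> J" "q a < 0" "0 < q b"
    using assms(3) by (meson linorder_neqE_linordered_idom)
  have "is_interval (q ` J)"
    using assms(1,2) by (simp add: is_interval_connected_1 connected_continuous_image)
  then have "0 \<in> q ` J"
    by (rule mem_is_interval_1_I[where a="q a" and c="q b"]) (use ab in auto)
  with assms(3) show False by auto
qed

lemma mono_on_if_DERIV_nonneg:
  fixes f :: "real \<Rightarrow> real"
  assumes "is_interval J" "\<And>t. t \<in> J \<Longrightarrow> (f has_real_derivative f' t) (at t)"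
    and "\<And>t. t \<in> J \<Longrightarrow> 0 \<le> f' t"
  shows "mono_on J f"
proof (rule mono_onI)
  fix a b assume ab: "a \<in> J" "b \<in> J" "a \<le> b"
  have "{a..b} \<subseteq> J" using mem_is_interval_1_I[OF assms(1) ab(1,2)] by auto
  show "f a \<le> f b"
  proof (rule DERIV_nonneg_imp_nondecreasing[OF ab(3)])
    fix y assume "a \<le> y" "y \<le> b"
    with \<open>{a..b} \<subseteq> J\<close> have "y \<in> J" by auto
    with assms(2,3) show "\<exists>d. (f has_real_derivative d) (at y) \<and> 0 \<le> d" by blast
  qed
qed

lemma K_monotone_on_noncritical:
  assumes J: "is_interval J" "J \<subseteq> {0<..}" and noncritical: "\<forall>t\<in>J. K_cubic x u (exp (- t)) \<noteq> 0"
  shows "mono_on J (\<lambda>t. K t x u) \<or> antimono_on J (\<lambda>t. K t x u)"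
proof -
  define c where "c t = K_cubic x u (exp (- t))" for t
  define d where "d t = exp (- t) / (1 - (exp (- t))\<^sup>2)\<^sup>2" for t :: real
  have d: "0 < d t" if "t \<in> J" for t
  proof -
    have "exp (- t) < 1" using J that by auto
    then have "0 < 1 - (exp (- t))\<^sup>2" by (simp add: abs_square_less_1)
    then show ?thesis by (simp add: d_def)
  qed
  have DERIV: "(K_log x u has_real_derivative d t * c t) (at t)" if "t \<in> J" for t
    using DERIV_K_log[of t x u] subsetD[OF J(2) that] by (simp add: c_def d_def)
  have exp_K_log: "K t x u = exp (R x + K_log x u t)" if "t \<in> J" for t
    using J that by (auto intro: K_eq_exp_K_log)
  have "continuous_on J c" unfolding c_def K_cubic_def by (intro continuous_intros)
  with J(1) noncritical consider "\<forall>t\<in>J. 0 < c t" | "\<forall>t\<in>J. c t < 0"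
    using is_interval_continuous_nonzero_sign unfolding c_def by blast
  then show ?thesis
  proof cases
    case 1
    have "mono_on J (K_log x u)"
      by (rule mono_on_if_DERIV_nonneg[OF J(1) DERIV]) (use 1 d in \<open>auto intro: less_imp_le\<close>)
    then have "mono_on J (\<lambda>t. K t x u)"
      by (intro mono_onI) (simp add: exp_K_log mono_onD)
    then show ?thesis ..
  next
    case 2
    have "mono_on J (\<lambda>t. - K_log x u t)"
      by (rule mono_on_if_DERIV_nonneg[OF J(1) DERIV_minus[OF DERIV]])
        (use 2 d in \<open>auto simp: mult_pos_neg less_imp_le\<close>)
    have "antimono_on J (\<lambda>t. K t x u)"
    proof (rule monotone_onI)
      fix a b assume ab: "a \<in> J" "b \<in> J" "a \<le> b"
      with \<open>mono_on J (\<lambda>t. - K_log x u t)\<close> have "K_log x u b \<le> K_log x u a"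
        using mono_onD by fastforce
      with ab show "K b x u \<le> K a x u" by (simp add: exp_K_log)
    qed
    then show ?thesis ..
  qed
qed

lemma K_critical_times_finite_card:
  "finite {t. K_cubic x u (exp (- t)) = 0} \<and> card {t. K_cubic x u (exp (- t)) = 0} \<le> 3"
proof -
  define p :: "real poly" where "p = [:-(u * x), u\<^sup>2 + x\<^sup>2 - 1, -(u * x), 1:]"
  have p: "poly p w = K_cubic x u w" for w
    unfolding p_def K_cubic_def by (simp add: algebra_simps power2_eq_square power3_eq_cube)
  have "p \<noteq> 0" "degree p \<le> 3" unfolding p_def by (simp_all add: degree_pCons_eq_if)
  have roots_finite: "finite {w. poly p w = 0}" by (rule poly_roots_finite[OF \<open>p \<noteq> 0\<close>])
  have sub: "{t. K_cubic x u (exp (- t)) = 0} \<subseteq> (\<lambda>w. - ln w) ` {w. poly p w = 0}"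
    by (auto simp: p image_iff intro!: exI[of _ "exp (- _)"])
  have "card {t. K_cubic x u (exp (- t)) = 0} \<le> card ((\<lambda>w. - ln w) ` {w. poly p w = 0})"
    using sub roots_finite by (intro card_mono) auto
  also have "\<dots> \<le> card {w. poly p w = 0}" by (rule card_image_le[OF roots_finite])
  also have "\<dots> \<le> 3"
    using card_poly_roots_bound[OF \<open>p \<noteq> 0\<close>] \<open>degree p \<le> 3\<close> by linarith
  finally show ?thesis using sub roots_finite by (auto intro: finite_subset)
qed

lemma variation_sum_K_le:
  assumes far: "1/2 \<le> (1 + \<bar>x\<bar>) * \<bar>x - u\<bar>" and ts: "sorted ts" "set ts \<subseteq> {0<..1}"
  shows "variation_sum (\<lambda>t. K t x u) ts \<le> 36864 * (1 + \<bar>x\<bar>) * exp (R x)"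
proof -
  define Z where "Z = {t. K_cubic x u (exp (- t)) = 0}"
  define M where "M = 288 * (1 + \<bar>x\<bar>) * exp (R x)"
  have Z: "finite Z" "card Z \<le> 3" using K_critical_times_finite_card unfolding Z_def by auto
  have "0 \<le> M" unfolding M_def by simp
  have "variation_sum (\<lambda>t. K t x u) ts \<le> 2 * 4 ^ card Z * M"
  proof (rule variation_sum_piecewise_monotone_le[OF Z(1) _ _ \<open>0 \<le> M\<close> _ ts])
    show "is_interval {0<..1::real}" unfolding is_interval_1 by auto
    show "\<forall>t\<in>{0<..1}. \<bar>K t x u\<bar> \<le> M"
      using K_le_off_diagonal[OF _ _ far] K_nonneg unfolding M_def by fastforce
    show "\<forall>J. is_interval J \<and> J \<subseteq> {0<..1} - Z
        \<longrightarrow> mono_on J (\<lambda>t. K t x u) \<or> antimono_on J (\<lambda>t. K t x u)"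
      by (intro allI impI K_monotone_on_noncritical) (auto simp: Z_def)
  qed
  also have "\<dots> \<le> 2 * 4 ^ 3 * M"
    using Z(2) \<open>0 \<le> M\<close> by (intro mult_right_mono mult_left_mono power_increasing) auto
  finally show ?thesis by (simp add: M_def algebra_simps)
qed

section \<open>The global part of the semigroup\<close>

lemma cutoff_bounded:
  fixes eta :: "real \<Rightarrow> real"
  assumes cont: "continuous_on {0<..} eta"
    and one: "\<forall>s\<in>{0..1/2}. eta s = 1" and zero: "\<forall>s\<ge>1. eta s = 0"
  obtains B where "\<forall>s\<ge>0. \<bar>1 - eta s\<bar> \<le> B"
proof -
  have "bounded (eta ` {1/2..1})"
    by (intro compact_imp_bounded compact_continuous_image continuous_on_subset[OF cont]) auto
  then obtain a where a: "\<forall>s\<in>{1/2..1}. \<bar>eta s\<bar> \<le> a" unfolding bounded_real by blast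
  have "\<bar>1 - eta s\<bar> \<le> 1 + \<bar>a\<bar>" if "0 \<le> s" for s
    using one zero a[rule_format, of s] that by (cases "s \<le> 1/2"; cases "1 \<le> s") auto
  then show thesis using that by blast
qed

lemma cutoff_measurable:
  fixes eta :: "real \<Rightarrow> real"
  assumes cont: "continuous_on {0<..} eta" and one: "\<forall>s\<in>{0..1/2}. eta s = 1"
  shows "(\<lambda>u. eta ((1 + \<bar>x\<bar>) * \<bar>x - u\<bar>)) \<in> borel_measurable borel"
proof -
  text \<open>Near the diagonal \<open>eta = 1\<close>, so clamping the argument below by \<open>1/4\<close> changes nothing
    and keeps it inside the domain of continuity.\<close>
  have "eta ((1 + \<bar>x\<bar>) * \<bar>x - u\<bar>) = eta (max ((1 + \<bar>x\<bar>) * \<bar>x - u\<bar>) (1/4))" for u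
    using one by (cases "(1 + \<bar>x\<bar>) * \<bar>x - u\<bar> \<le> 1/4") (auto simp: max_def)
  moreover have "continuous_on UNIV (\<lambda>u. eta (max ((1 + \<bar>x\<bar>) * \<bar>x - u\<bar>) (1/4)))"
    by (rule continuous_on_compose2[OF cont]) (auto intro!: continuous_intros)
  ultimately show ?thesis by (simp add: borel_measurable_continuous_onI)
qed

lemma Hglob_integrand_integrable:
  fixes eta f :: "real \<Rightarrow> real"
  assumes cont: "continuous_on {0<..} eta" and one: "\<forall>s\<in>{0..1/2}. eta s = 1"
    and B: "\<forall>s\<ge>0. \<bar>1 - eta s\<bar> \<le> B" and f: "integrable gauss f" and t: "0 < t"
  shows "integrable gauss (\<lambda>u. f u * K t x u * (1 - eta ((1 + \<bar>x\<bar>) * \<bar>x - u\<bar>)))"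
proof (rule Bochner_Integration.integrable_bound)
  show "integrable gauss (\<lambda>u. f u * (exp (R x) / sqrt (1 - exp (-2 * t)) * B))"
    using f by (intro integrable_mult_left) auto
  have "(\<lambda>u. eta ((1 + \<bar>x\<bar>) * \<bar>x - u\<bar>)) \<in> borel_measurable gauss"
    using cutoff_measurable[OF cont one] measurable_cong_sets[OF sets_gauss refl] by simp
  moreover have "(\<lambda>u. K t x u) \<in> borel_measurable gauss"
    unfolding K_def by measurable
  moreover have "f \<in> borel_measurable gauss" using f by (rule borel_measurable_integrable)
  ultimately show "(\<lambda>u. f u * K t x u * (1 - eta ((1 + \<bar>x\<bar>) * \<bar>x - u\<bar>))) \<in> borel_measurable gauss"
    by measurable
  define C where "C = exp (R x) / sqrt (1 - exp (-2 * t)) * B"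
  have "0 \<le> B" using B[rule_format, of 0] abs_ge_zero[of "1 - eta 0"] by linarith
  moreover have "0 < 1 - exp (-2 * t)" using t by simp
  ultimately have "0 \<le> C" unfolding C_def by simp
  have "\<bar>K t x u * (1 - eta ((1 + \<bar>x\<bar>) * \<bar>x - u\<bar>))\<bar> \<le> C" for u
    unfolding abs_mult C_def using K_le_inv_sqrt[OF t] K_nonneg[OF t] B \<open>0 \<le> B\<close> \<open>0 < 1 - exp (-2 * t)\<close>
    by (intro mult_mono) auto
  then have "\<bar>f u\<bar> * \<bar>K t x u * (1 - eta ((1 + \<bar>x\<bar>) * \<bar>x - u\<bar>))\<bar> \<le> \<bar>f u * C\<bar>" for u
    using \<open>0 \<le> C\<close> by (simp add: abs_mult mult_left_mono)
  then show "AE u in gauss. norm (f u * K t x u * (1 - eta ((1 + \<bar>x\<bar>) * \<bar>x - u\<bar>)))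
      \<le> norm (f u * (exp (R x) / sqrt (1 - exp (-2 * t)) * B))"
    unfolding C_def by (simp add: abs_mult mult.assoc)
qed

lemma cutoff_mult_variation_sum_K_le:
  fixes eta :: "real \<Rightarrow> real"
  assumes one: "\<forall>s\<in>{0..1/2}. eta s = 1" and B: "\<forall>s\<ge>0. \<bar>1 - eta s\<bar> \<le> B"
    and ts: "sorted ts" "set ts \<subseteq> {0<..1}"
  shows "\<bar>1 - eta ((1 + \<bar>x\<bar>) * \<bar>x - u\<bar>)\<bar> * variation_sum (\<lambda>t. K t x u) ts
    \<le> B * (36864 * (1 + \<bar>x\<bar>) * exp (R x))"
proof (cases "eta ((1 + \<bar>x\<bar>) * \<bar>x - u\<bar>) = 1")
  case False
  have nonneg: "0 \<le> (1 + \<bar>x\<bar>) * \<bar>x - u\<bar>" by simp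
  with False one have "1/2 \<le> (1 + \<bar>x\<bar>) * \<bar>x - u\<bar>" by force
  then have "variation_sum (\<lambda>t. K t x u) ts \<le> 36864 * (1 + \<bar>x\<bar>) * exp (R x)"
    by (rule variation_sum_K_le[OF _ ts])
  moreover have "\<bar>1 - eta ((1 + \<bar>x\<bar>) * \<bar>x - u\<bar>)\<bar> \<le> B" using B nonneg by simp
  ultimately show ?thesis
    using variation_sum_nonneg by (intro mult_mono) auto
next
  case True
  have "0 \<le> B" using B[rule_format, of 0] abs_ge_zero[of "1 - eta 0"] by linarith
  with True show ?thesis by simp
qed

lemma variation_sum_Hglob_le:
  fixes eta f :: "real \<Rightarrow> real"
  assumes cont: "continuous_on {0<..} eta" and one: "\<forall>s\<in>{0..1/2}. eta s = 1"
    and B: "\<forall>s\<ge>0. \<bar>1 - eta s\<bar> \<le> B" and f: "integrable gauss f"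
    and ts: "sorted ts" "set ts \<subseteq> {0<..1}"
  shows "variation_sum (\<lambda>t. Hglob eta t f x) ts
      \<le> (\<integral>u. \<bar>f u\<bar> \<partial>gauss) * B * (36864 * (1 + \<bar>x\<bar>) * exp (R x))"
proof -
  define M where "M = 36864 * (1 + \<bar>x\<bar>) * exp (R x)"
  define c where "c u = 1 - eta ((1 + \<bar>x\<bar>) * \<bar>x - u\<bar>)" for u
  have integrable: "integrable gauss (\<lambda>u. f u * K t x u * c u)" if "t \<in> set ts" for t
    unfolding c_def using Hglob_integrand_integrable[OF cont one B f] that ts(2) by auto
  have pointwise: "variation_sum (\<lambda>t. f u * K t x u * c u) ts \<le> \<bar>f u\<bar> * (B * M)" for u
  proof -
    have "variation_sum (\<lambda>t. f u * K t x u * c u) ts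
        = \<bar>f u\<bar> * (\<bar>c u\<bar> * variation_sum (\<lambda>t. K t x u) ts)"
      using variation_sum_cmult[of "f u * c u" "\<lambda>t. K t x u" ts] by (simp add: abs_mult ac_simps)
    also have "\<dots> \<le> \<bar>f u\<bar> * (B * M)"
      unfolding c_def M_def
      by (intro mult_left_mono cutoff_mult_variation_sum_K_le[OF one B ts]) simp
    finally show ?thesis .
  qed
  have "variation_sum (\<lambda>t. Hglob eta t f x) ts
      \<le> (\<integral>u. variation_sum (\<lambda>t. f u * K t x u * c u) ts \<partial>gauss)"
    unfolding Hglob_def c_def[symmetric] by (rule variation_sum_integral_le[OF integrable])
  also have "\<dots> \<le> (\<integral>u. \<bar>f u\<bar> * (B * M) \<partial>gauss)"
    using integrable_variation_sum[OF integrable] f pointwise by (intro integral_mono) auto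
  finally show ?thesis unfolding M_def by (simp add: mult.assoc)
qed

theorem proposition4p1:
  fixes eta :: "real \<Rightarrow> real" and \<rho> :: real
  assumes eta_smooth: "\<forall>k. (deriv ^^ k) eta differentiable_on {0<..}"
    and eta_nonneg: "\<forall>s\<ge>0. eta s \<ge> 0"
    and eta_one: "\<forall>s\<in>{0..1/2}. eta s = 1"
    and eta_zero: "\<forall>s\<ge>1. eta s = 0"
    and rho: "\<rho> > 2"
  shows "\<exists>C. \<forall>\<alpha>>0. \<forall>f. integrable gauss f \<longrightarrow>
           emeasure gauss {x. rho_var \<rho> {0<..1} (\<lambda>t. Hglob eta t f x) > ereal \<alpha>}
             \<le> ennreal (C / \<alpha> * (\<integral>u. \<bar>f u\<bar> \<partial>gauss))"
proof -
  have cont: "continuous_on {0<..} eta"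
    using eta_smooth[rule_format, of 0] by (simp add: differentiable_imp_continuous_on)
  obtain B where B: "\<forall>s\<ge>0. \<bar>1 - eta s\<bar> \<le> B"
    using cutoff_bounded[OF cont eta_one eta_zero] by blast
  have "0 \<le> B" using B[rule_format, of 0] abs_ge_zero[of "1 - eta 0"] by linarith
  show ?thesis
  proof (intro exI[of _ "4 * B * 36864"] allI impI)
    fix \<alpha> :: real and f :: "real \<Rightarrow> real"
    assume \<alpha>: "\<alpha> > 0" and f: "integrable gauss f"
    define c where "c = (\<integral>u. \<bar>f u\<bar> \<partial>gauss) * B * 36864"
    have "rho_var \<rho> {0<..1} (\<lambda>t. Hglob eta t f x) \<le> ereal (c * ((1 + \<bar>x\<bar>) * exp (x\<^sup>2 / 2)))" for x
    proof (rule rho_var_le)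
      fix ts :: "real list" assume "sorted_wrt (<) ts" "set ts \<subseteq> {0<..1}"
      then have "variation_sum (\<lambda>t. Hglob eta t f x) ts
          \<le> (\<integral>u. \<bar>f u\<bar> \<partial>gauss) * B * (36864 * (1 + \<bar>x\<bar>) * exp (R x))"
        by (intro variation_sum_Hglob_le[OF cont eta_one B f] strict_sorted_imp_sorted)
      then show "variation_sum (\<lambda>t. Hglob eta t f x) ts \<le> c * ((1 + \<bar>x\<bar>) * exp (x\<^sup>2 / 2))"
        by (simp add: c_def R_def algebra_simps)
    qed (use rho in simp)
    from emeasure_gauss_dominated_gt[OF this _ \<alpha>] show
      "emeasure gauss {x. rho_var \<rho> {0<..1} (\<lambda>t. Hglob eta t f x) > ereal \<alpha>}
         \<le> ennreal (4 * B * 36864 / \<alpha> * (\<integral>u. \<bar>f u\<bar> \<partial>gauss))"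
      using \<open>0 \<le> B\<close> by (simp add: c_def ac_simps)
  qed
qed

end
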